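(* Let $\mathcal A,\mathcal B_1,\mathcal B_2$ be finite-dimensional complex Hilbert spaces and $B\in\mathcal B(\mathcal B_2\otimes\mathcal B_1,\mathcal A)$. The map $\mathcal W:\mathcal B(\mathcal A)\to\mathcal B(\mathcal B_2)$, $\mathcal W(A)=\operatorname{Tr}_{\mathcal B_1}[B^\dagger AB]$, is injective if and only if there exists an injective linear map $\mathcal V:\mathcal B(\mathcal A)\to\mathcal B(\mathcal B_2)$ such that $B(\mathcal V(A)\otimes I_{\mathcal B_1})B^\dagger=A$ for all $A\in\mathcal B(\mathcal A)$. In that case $\mathcal W(A)=\operatorname{Tr}_{\mathcal B_1}[B^\dagger B(\mathcal V(A)\otimes I_{\mathcal B_1})B^\dagger B]$ for all $A$.
   Context: $\mathcal B(\mathcal X,\mathcal Y)$ denotes the space of linear operators from $\mathcal X$ to $\mathcal Y$, and $\mathcal B(\mathcal X)=\mathcal B(\mathcal X,\mathcal X)$. $\operatorname{Tr}_{\mathcal B_1}$ denotes the partial trace over $\mathcal B_1$. *)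

theory Defs
  imports "HOL-Analysis.Analysis"
begin

text \<open>Finite-dimensional complex Hilbert spaces are modelled by finite index types
  (orthonormal bases); an operator from a space indexed by 'n to a space indexed by 'm
  is a matrix of type complex^'n^'m. The tensor product B2 \<otimes> B1 is indexed by 'b2 \<times> 'b1.\<close>

definition adj :: "complex^'n^'m \<Rightarrow> complex^'m^'n" where
  "adj M = (\<chi> i j. cnj (M $ j $ i))"

definition ptrace2 :: "complex^('b2 \<times> 'b1::finite)^('b2 \<times> 'b1) \<Rightarrow> complex^'b2^'b2"
  where "ptrace2 X = (\<chi> i j. \<Sum>k\<in>UNIV. X $ (i,k) $ (j,k))"

definition tensor_id :: "complex^'b2^'b2 \<Rightarrow> complex^('b2 \<times> 'b1::finite)^('b2 \<times> 'b1)"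
  where "tensor_id V = (\<chi> p q. V $ fst p $ fst q * (if snd p = snd q then 1 else 0))"

definition mat_scale :: "complex \<Rightarrow> complex^'n^'m \<Rightarrow> complex^'n^'m" where
  "mat_scale c M = (\<chi> i j. c * M $ i $ j)"

definition clinear_op :: "(complex^'n^'m \<Rightarrow> complex^'p^'q) \<Rightarrow> bool" where
  "clinear_op f \<longleftrightarrow> (\<forall>X Y. f (X + Y) = f X + f Y) \<and> (\<forall>c X. f (mat_scale c X) = mat_scale c (f X))"

end

theory Submission
  imports Defs
begin

text \<open>With respect to the real Hilbert-Schmidt inner product \<open>\<langle>A, Y\<rangle> = Re tr(Y\<^sup>\<dagger> A)\<close>,
  the map \<open>W\<close> is the adjoint of \<open>\<Phi>(X) = B (X \<otimes> I) B\<^sup>\<dagger>\<close>: the partial trace is adjoint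
  to \<open>X \<mapsto> X \<otimes> I\<close>, and the trace is cyclic. Hence \<open>W\<close> is injective iff \<open>\<Phi>\<close> is surjective,
  and a surjective complex-linear \<open>\<Phi>\<close> has a complex-linear right inverse \<open>V\<close>, which is
  automatically injective. The formula for \<open>W\<close> is \<open>W A = W (\<Phi> (V A))\<close> written out.\<close>

lemma adj_adj [simp]: "adj (adj M) = M"
  by (simp add: adj_def vec_eq_iff)

lemma adj_matrix_mult: "adj (M ** N) = adj N ** adj M"
  by (simp add: adj_def matrix_matrix_mult_def vec_eq_iff mult.commute)

lemma adj_tensor_id:
  "adj (tensor_id X :: complex^('b2::finite \<times> 'b1::finite)^('b2 \<times> 'b1)) = tensor_id (adj X)"
  by (simp add: adj_def tensor_id_def vec_eq_iff)

lemma tensor_id_add: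
  "(tensor_id (X + Y) :: complex^('b2::finite \<times> 'b1::finite)^('b2 \<times> 'b1)) = tensor_id X + tensor_id Y"
  by (simp add: tensor_id_def vec_eq_iff algebra_simps)

lemma tensor_id_mat_scale:
  "(tensor_id (mat_scale c X) :: complex^('b2::finite \<times> 'b1::finite)^('b2 \<times> 'b1)) = mat_scale c (tensor_id X)"
  by (simp add: tensor_id_def mat_scale_def vec_eq_iff)

lemma matrix_add_rdistrib: "(A + B) ** C = A ** C + B ** (C :: 'a::semiring_1^'p^'n)"
  by (simp add: matrix_matrix_mult_def vec_eq_iff sum.distrib distrib_right)

lemma mat_scale_matrix_mult_left: "mat_scale c M ** N = mat_scale c (M ** N)"
  by (simp add: matrix_matrix_mult_def mat_scale_def vec_eq_iff sum_distrib_left mult.assoc)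

lemma mat_scale_matrix_mult_right: "M ** mat_scale c N = mat_scale c (M ** N)"
  by (simp add: matrix_matrix_mult_def mat_scale_def vec_eq_iff sum_distrib_left algebra_simps)

lemma vector_space_mat_scale: "vector_space (mat_scale :: complex \<Rightarrow> complex^'n^'m \<Rightarrow> _)"
  by unfold_locales (simp_all add: mat_scale_def vec_eq_iff algebra_simps)

lemma clinear_op_iff_linear: "clinear_op f \<longleftrightarrow> Vector_Spaces.linear mat_scale mat_scale f"
  by (simp add: clinear_op_def Vector_Spaces.linear_iff vector_space_mat_scale)

lemma scaleR_eq_mat_scale: "r *\<^sub>R M = mat_scale (of_real r) M"
  by (simp add: mat_scale_def vec_eq_iff) (simp add: scaleR_conv_of_real)

lemma clinear_op_imp_linear: "clinear_op f \<Longrightarrow> linear f"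
  by (intro linearI) (simp_all add: clinear_op_def scaleR_eq_mat_scale)

lemma clinear_op_surj_right_inverse:
  assumes "clinear_op f" and "surj f"
  obtains g where "clinear_op g" and "inj g" and "\<And>y. f (g y) = y"
proof -
  interpret vector_space_pair "mat_scale :: complex \<Rightarrow> complex^'n^'m \<Rightarrow> _" "mat_scale :: complex \<Rightarrow> complex^'p^'q \<Rightarrow> _"
    by (simp add: vector_space_pair_def vector_space_mat_scale)
  obtain g where "Vector_Spaces.linear mat_scale mat_scale g" and "f \<circ> g = id"
    using linear_surjective_right_inverse assms by (metis clinear_op_iff_linear)
  then have "clinear_op g" and "f (g y) = y" for y
    by (simp_all add: clinear_op_iff_linear pointfree_idE)
  then show thesis
    by (metis that injI)
qed

lemma clinear_op_conj_tensor_id: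
  fixes B :: "complex^('b2::finite \<times> 'b1::finite)^'a::finite"
  shows "clinear_op (\<lambda>X. B ** (tensor_id X :: complex^('b2 \<times> 'b1)^('b2 \<times> 'b1)) ** adj B)"
  by (simp add: clinear_op_def tensor_id_add tensor_id_mat_scale matrix_add_ldistrib
      matrix_add_rdistrib mat_scale_matrix_mult_left mat_scale_matrix_mult_right)

lemma sum_UNIV_prod:
  "(\<Sum>p\<in>UNIV. f p) = (\<Sum>i\<in>UNIV. \<Sum>k\<in>UNIV. f (i, k))"
  for f :: "'a::finite \<times> 'b::finite \<Rightarrow> 'c::comm_monoid_add"
  by (simp add: UNIV_Times_UNIV[symmetric] sum.cartesian_product del: UNIV_Times_UNIV)

lemma trace_ptrace2_mult:
  fixes Z :: "complex^('b2::finite \<times> 'b1::finite)^('b2 \<times> 'b1)"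
  shows "trace (ptrace2 Z ** Y) = trace (Z ** (tensor_id Y :: complex^('b2 \<times> 'b1)^('b2 \<times> 'b1)))"
proof -
  have "trace (Z ** (tensor_id Y :: complex^('b2 \<times> 'b1)^('b2 \<times> 'b1)))
      = (\<Sum>i\<in>UNIV. \<Sum>k\<in>UNIV. \<Sum>j\<in>UNIV. Z $ (i,k) $ (j,k) * Y $ j $ i)"
    unfolding trace_def matrix_matrix_mult_def tensor_id_def
    by (simp only: vec_lambda_beta sum_UNIV_prod[where 'b='b1] fst_conv snd_conv mult_zero_right
        mult_1_right if_distrib if_distribR sum.delta finite UNIV_I if_True)
  also have "\<dots> = (\<Sum>i\<in>UNIV. \<Sum>j\<in>UNIV. \<Sum>k\<in>UNIV. Z $ (i,k) $ (j,k) * Y $ j $ i)"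
    by (rule sum.cong[OF refl], rule sum.swap)
  also have "\<dots> = trace (ptrace2 Z ** Y)"
    unfolding trace_def matrix_matrix_mult_def ptrace2_def
    by (simp only: vec_lambda_beta sum_distrib_right)
  finally show ?thesis ..
qed

lemma inner_matrix_eq_Re_trace: "inner (A :: complex^'n^'m) Y = Re (trace (adj Y ** A))"
proof -
  have "inner A Y = (\<Sum>i\<in>UNIV. \<Sum>j\<in>UNIV. Re (cnj (Y $ i $ j) * A $ i $ j))"
    by (simp add: inner_vec_def inner_complex_def mult.commute)
  also have "\<dots> = (\<Sum>j\<in>UNIV. \<Sum>i\<in>UNIV. Re (cnj (Y $ i $ j) * A $ i $ j))"
    by (rule sum.swap)
  also have "\<dots> = Re (trace (adj Y ** A))"
    by (simp only: trace_def matrix_matrix_mult_def adj_def vec_lambda_beta Re_sum)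
  finally show ?thesis .
qed

lemma inner_ptrace2_conj_eq_inner_conj_tensor_id:
  fixes B :: "complex^('b2::finite \<times> 'b1::finite)^'a::finite"
  shows "inner (ptrace2 (adj B ** A ** B)) X
       = inner A (B ** (tensor_id X :: complex^('b2 \<times> 'b1)^('b2 \<times> 'b1)) ** adj B)"
proof -
  let ?T = "tensor_id (adj X) :: complex^('b2 \<times> 'b1)^('b2 \<times> 'b1)"
  have "trace (adj X ** ptrace2 (adj B ** A ** B)) = trace (ptrace2 (adj B ** A ** B) ** adj X)"
    by (rule trace_mul_sym)
  also have "\<dots> = trace (adj B ** A ** B ** ?T)"
    by (rule trace_ptrace2_mult)
  also have "\<dots> = trace (A ** B ** ?T ** adj B)"
    using trace_mul_sym[of "adj B" "A ** B ** ?T"] by (simp only: matrix_mul_assoc)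
  also have "\<dots> = trace (B ** ?T ** adj B ** A)"
    using trace_mul_sym[of A "B ** ?T ** adj B"] by (simp only: matrix_mul_assoc)
  also have "\<dots> = trace (adj (B ** (tensor_id X :: complex^('b2 \<times> 'b1)^('b2 \<times> 'b1)) ** adj B) ** A)"
    by (simp only: adj_matrix_mult adj_tensor_id adj_adj matrix_mul_assoc)
  finally show ?thesis
    by (simp only: inner_matrix_eq_Re_trace)
qed

theorem corollary2:
  fixes B :: "complex^('b2::finite \<times> 'b1::finite)^('a::finite)"
  defines "W \<equiv> (\<lambda>A :: complex^'a^'a. ptrace2 (adj B ** A ** B) :: complex^'b2^'b2)"
  shows "(inj W \<longleftrightarrow>
           (\<exists>V :: complex^'a^'a \<Rightarrow> complex^'b2^'b2.
              clinear_op V \<and> inj V \<and>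
              (\<forall>A. B ** (tensor_id (V A) :: complex^('b2 \<times> 'b1)^('b2 \<times> 'b1)) ** adj B = A)))
       \<and> (inj W \<longrightarrow>
           (\<forall>V :: complex^'a^'a \<Rightarrow> complex^'b2^'b2.
              clinear_op V \<and> inj V \<and>
              (\<forall>A. B ** (tensor_id (V A) :: complex^('b2 \<times> 'b1)^('b2 \<times> 'b1)) ** adj B = A)
              \<longrightarrow> (\<forall>A. W A = ptrace2 (adj B ** B ** (tensor_id (V A) :: complex^('b2 \<times> 'b1)^('b2 \<times> 'b1)) ** adj B ** B))))"
proof -
  define \<Phi> where "\<Phi> \<equiv> \<lambda>X :: complex^'b2^'b2. B ** (tensor_id X :: complex^('b2 \<times> 'b1)^('b2 \<times> 'b1)) ** adj B"
  have "clinear_op \<Phi>"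
    unfolding \<Phi>_def by (rule clinear_op_conj_tensor_id)
  have "adjoint \<Phi> = W"
    unfolding W_def \<Phi>_def
    by (rule adjoint_unique) (metis inner_commute inner_ptrace2_conj_eq_inner_conj_tensor_id)
  with \<open>clinear_op \<Phi>\<close> have "inj W \<longleftrightarrow> surj \<Phi>"
    by (metis inj_adjoint_iff_surj clinear_op_imp_linear)
  moreover have "surj \<Phi> \<longleftrightarrow> (\<exists>V. clinear_op V \<and> inj V \<and> (\<forall>A. \<Phi> (V A) = A))"
    by (metis \<open>clinear_op \<Phi>\<close> clinear_op_surj_right_inverse surjI)
  moreover have "W A = ptrace2 (adj B ** B ** (tensor_id (V A) :: complex^('b2 \<times> 'b1)^('b2 \<times> 'b1)) ** adj B ** B)"
    if "\<forall>A. \<Phi> (V A) = A" for V A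
  proof -
    from that have "W A = W (\<Phi> (V A))" by simp
    then show ?thesis by (simp add: W_def \<Phi>_def matrix_mul_assoc)
  qed
  ultimately show ?thesis
    unfolding \<Phi>_def by blast
qed

end
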